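(* In the setting below, assume $\|\nabla f_i(x)\|\le G_i$ for all $x$ and $i$, and that $\psi$ satisfies the $\mu_\psi$-condition with $\mu_\psi>0$. For any $m\in\mathbb N$, with stepsizes $\eta_k=\frac{m}{n\mu_\psi k}$ for $k\in[K]$ and arbitrary permutations $\sigma_k$, there is an absolute constant $C>0$ such that $$F(x_{K+1})-F_*\le C\left(\frac{\mu_\psi D^2}{\binom{K+m}{m}}+\frac{\bar G^2m\log K}{\mu_\psi K}\right).$$
   Context: Setting. Let $n,d\in\mathbb N$, let $f_1,\dots,f_n:\mathbb R^d\to\mathbb R$ be convex, $f=\frac1n\sum_{i=1}^nf_i$, let $\psi:\mathbb R^d\to\mathbb R\cup\{+\infty\}$ be proper, closed and convex, and $F=f+\psi$. For a convex function $g$, $\nabla g(x)$ denotes an element of $\partial g(x)$ (for each $f_i$ a fixed selection of subgradients, the same one used in the algorithm), and $B_g(x,y)=g(x)-g(y)-\langle\nabla g(y),x-y\rangle$. The $\mu_\psi$-condition: $\mu_\psi\ge0$ and $B_\psi(x,y)\ge\frac{\mu_\psi}{2}\|x-y\|^2$ for all $x,y$ with $\partial\psi(y)\neq\emptyset$ and every choice of $\nabla\psi(y)\in\partial\psi(y)$. Assume there is $x_*\in\mathbb R^d$ with $F(x_* )=\inf_{x}F(x)\in\mathbb R$; write $F_*=F(x_* )$. Proximal shuffling gradient method: given $x_1\in\mathrm{dom}\,\psi$, a number of epochs $K\ge2$ and stepsizes $\eta_k>0$, for $k=1,\dots,K$: choose a permutation $\sigma_k=(\sigma_k^1,\dots,\sigma_k^n)$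 of $[n]=\{1,\dots,n\}$; set $x_k^1=x_k$ and $x_k^{i+1}=x_k^i-\eta_k\nabla f_{\sigma_k^i}(x_k^i)$ for $i=1,\dots,n$; set $x_{k+1}=\arg\min_{x\in\mathbb R^d}\{n\psi(x)+\frac{1}{2\eta_k}\|x-x_k^{n+1}\|^2\}$. $D=\|x_*-x_1\|$; $\|\cdot\|$ is the Euclidean norm; $\log$ is natural. Lipschitz condition: constants $G_i>0$ with $\|\nabla f_i(x)\|\le G_i$ for all $x\in\mathbb R^d$, $i\in[n]$ (for every subgradient); $\bar G=\frac1n\sum_{i=1}^nG_i$. *)

theory Defs
  imports Complex_Main
begin

text \<open>Euclidean space R^d is represented explicitly (so that the constant C can be
stated independently of the dimension d) as the functions nat => real vanishing
at all coordinates >= d, with the standard inner product and Euclidean norm.\<close>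

definition vec :: "nat \<Rightarrow> (nat \<Rightarrow> real) set" where
  "vec d = {x. \<forall>i\<ge>d. x i = 0}"

definition ip :: "nat \<Rightarrow> (nat \<Rightarrow> real) \<Rightarrow> (nat \<Rightarrow> real) \<Rightarrow> real" where
  "ip d x y = (\<Sum>i<d. x i * y i)"

definition nrm :: "nat \<Rightarrow> (nat \<Rightarrow> real) \<Rightarrow> real" where
  "nrm d x = sqrt (ip d x x)"

definition vdiff :: "(nat \<Rightarrow> real) \<Rightarrow> (nat \<Rightarrow> real) \<Rightarrow> (nat \<Rightarrow> real)" where
  "vdiff x y = (\<lambda>i. x i - y i)"

definition vcomb :: "real \<Rightarrow> (nat \<Rightarrow> real) \<Rightarrow> real \<Rightarrow> (nat \<Rightarrow> real) \<Rightarrow> (nat \<Rightarrow> real)" where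
  "vcomb a x b y = (\<lambda>i. a * x i + b * y i)"

definition convex_set :: "nat \<Rightarrow> (nat \<Rightarrow> real) set \<Rightarrow> bool" where
  "convex_set d S \<longleftrightarrow> S \<subseteq> vec d \<and>
     (\<forall>x\<in>S. \<forall>y\<in>S. \<forall>t\<in>{0..1}. vcomb (1 - t) x t y \<in> S)"

definition convex_fun_on :: "(nat \<Rightarrow> real) set \<Rightarrow> ((nat \<Rightarrow> real) \<Rightarrow> real) \<Rightarrow> bool" where
  "convex_fun_on S h \<longleftrightarrow>
     (\<forall>x\<in>S. \<forall>y\<in>S. \<forall>t\<in>{0..1}. h (vcomb (1 - t) x t y) \<le> (1 - t) * h x + t * h y)"

text \<open>Subdifferential at y of the extended-valued function that equals h on S and
+infinity outside S (empty if y is not in S).\<close>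
definition subgrad :: "nat \<Rightarrow> (nat \<Rightarrow> real) set \<Rightarrow> ((nat \<Rightarrow> real) \<Rightarrow> real) \<Rightarrow> (nat \<Rightarrow> real)
    \<Rightarrow> (nat \<Rightarrow> real) set" where
  "subgrad d S h y = {g. y \<in> S \<and> g \<in> vec d \<and> (\<forall>x\<in>S. h y + ip d g (vdiff x y) \<le> h x)}"

text \<open>Closedness (lower semicontinuity = closed epigraph) of the extended-valued function
equal to h on S and +infinity outside S.\<close>
definition closed_fun :: "nat \<Rightarrow> (nat \<Rightarrow> real) set \<Rightarrow> ((nat \<Rightarrow> real) \<Rightarrow> real) \<Rightarrow> bool" where
  "closed_fun d S h \<longleftrightarrow>
     (\<forall>xs ts x t. (\<forall>j. xs j \<in> S \<and> h (xs j) \<le> ts j) \<and> x \<in> vec d \<and>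
        (\<lambda>j. nrm d (vdiff (xs j) x)) \<longlonglongrightarrow> 0 \<and> ts \<longlonglongrightarrow> t
        \<longrightarrow> x \<in> S \<and> h x \<le> t)"

text \<open>psi : R^d -> R \<union> {+inf} proper, closed, convex; represented by its effective
domain S = dom psi and its (real) values on S.\<close>
definition proper_closed_convex :: "nat \<Rightarrow> (nat \<Rightarrow> real) set \<Rightarrow> ((nat \<Rightarrow> real) \<Rightarrow> real) \<Rightarrow> bool" where
  "proper_closed_convex d S h \<longleftrightarrow> S \<noteq> {} \<and> convex_set d S \<and> convex_fun_on S h \<and> closed_fun d S h"

text \<open>The mu_psi-condition: B_psi(x,y) \<ge> mu/2 ||x-y||^2 for every y with nonempty
subdifferential and every subgradient at y (trivial when x is outside dom psi).\<close>
definition mu_condition :: "nat \<Rightarrow> (nat \<Rightarrow> real) set \<Rightarrow> ((nat \<Rightarrow> real) \<Rightarrow> real) \<Rightarrow> real \<Rightarrow> bool" where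
  "mu_condition d S h mu \<longleftrightarrow> mu \<ge> 0 \<and>
     (\<forall>x\<in>S. \<forall>y. \<forall>g\<in>subgrad d S h y.
        h x - h y - ip d g (vdiff x y) \<ge> mu / 2 * (nrm d (vdiff x y))\<^sup>2)"

text \<open>The proximal step is
characterised as a minimiser over dom psi (points outside have objective +inf).\<close>
definition prox_shuffling_run ::
  "nat \<Rightarrow> nat \<Rightarrow> (nat \<Rightarrow> (nat \<Rightarrow> real) \<Rightarrow> (nat \<Rightarrow> real)) \<Rightarrow> (nat \<Rightarrow> real) set
   \<Rightarrow> ((nat \<Rightarrow> real) \<Rightarrow> real) \<Rightarrow> nat \<Rightarrow> (nat \<Rightarrow> real) \<Rightarrow> (nat \<Rightarrow> nat \<Rightarrow> nat)
   \<Rightarrow> (nat \<Rightarrow> (nat \<Rightarrow> real)) \<Rightarrow> (nat \<Rightarrow> nat \<Rightarrow> (nat \<Rightarrow> real)) \<Rightarrow> bool" where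
  "prox_shuffling_run d n gf S psi K eta sigma xs xin \<longleftrightarrow>
     xs 1 \<in> S \<and>
     (\<forall>k\<in>{1..K}.
        bij_betw (sigma k) {1..n} {1..n} \<and>
        xin k 1 = xs k \<and>
        (\<forall>i\<in>{1..n}. xin k (Suc i) = vcomb 1 (xin k i) (- eta k) (gf (sigma k i) (xin k i))) \<and>
        xs (Suc k) \<in> S \<and>
        (\<forall>y\<in>S. real n * psi (xs (Suc k)) + 1 / (2 * eta k) * (nrm d (vdiff (xs (Suc k)) (xin k (Suc n))))\<^sup>2
                 \<le> real n * psi y + 1 / (2 * eta k) * (nrm d (vdiff y (xin k (Suc n))))\<^sup>2))"

end

theory Submission
  imports Defs "HOL-Analysis.L2_Norm"
begin

text \<open>
  Within one epoch the inner iterates stay within \<open>\<eta>\<^sub>k \<Sum>\<^sub>i G\<^sub>i\<close> of the epoch start, so an epoch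
  acts like a single proximal subgradient step with stepsize \<open>n \<eta>\<^sub>k\<close>; with the
  \<open>\<mu>\<^sub>\<psi>\<close>-condition for the proximal step this gives, for every comparator \<open>y \<in> dom \<psi>\<close>,
  \<open>m (F x\<^sub>k\<^sub>+\<^sub>1 - F y) \<le> \<mu>k/2 \<parallel>x\<^sub>k - y\<parallel>\<^sup>2 - \<mu>(k+m)/2 \<parallel>x\<^sub>k\<^sub>+\<^sub>1 - y\<parallel>\<^sup>2 + 4m\<^sup>2 Gbar\<^sup>2/(\<mu>k)\<close>.
  The weights \<open>p\<^sub>k = (k+m-1 choose k)\<close> satisfy \<open>p\<^sub>k\<^sub>+\<^sub>1 (k+1) = p\<^sub>k (k+m)\<close>, so the weighted
  distance terms telescope. Taking \<open>y = x\<^sub>*\<close> bounds the weighted average of all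
  \<open>F x\<^sub>k\<^sub>+\<^sub>1 - F x\<^sub>*\<close>, whose normaliser \<open>\<Sum> p\<^sub>k\<close> is \<open>(K+m choose m) - 1\<close>; taking \<open>y = x\<^sub>j\<close>
  controls how much the suffix averages \<open>\<Sum>\<^sub>k\<^sub>\<ge>\<^sub>j p\<^sub>k h\<^sub>k\<^sub>+\<^sub>1 / \<Sum>\<^sub>k\<^sub>\<ge>\<^sub>j p\<^sub>k\<close> can grow with \<open>j\<close>,
  and the last suffix average is the last iterate. Because the weights are
  nondecreasing, the accumulated growth is bounded by
  \<open>\<Sum>\<^sub>k 1/(k(K+1-k)) = O(log K / K)\<close>.
\<close>

section \<open>Euclidean geometry of coordinate vectors\<close>

lemma nrm_eq_L2_set: "nrm d x = L2_set x {..<d}"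
  unfolding nrm_def ip_def L2_set_def by (simp add: power2_eq_square)

lemma ip_commute: "ip d x y = ip d y x"
  unfolding ip_def by (simp add: mult.commute)

lemma nrm_nonneg: "nrm d x \<ge> 0"
  unfolding nrm_eq_L2_set by (rule L2_set_nonneg)

lemma nrm_power2: "(nrm d x)\<^sup>2 = ip d x x"
  unfolding nrm_def ip_def by (simp add: sum_nonneg)

lemma ip_le_nrm_mult: "ip d x y \<le> nrm d x * nrm d y"
proof -
  have "ip d x y \<le> (\<Sum>i<d. \<bar>x i\<bar> * \<bar>y i\<bar>)"
    unfolding ip_def by (rule sum_mono) (simp add: abs_mult[symmetric])
  also have "\<dots> \<le> nrm d x * nrm d y"
    unfolding nrm_eq_L2_set by (rule L2_set_mult_ineq)
  finally show ?thesis .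
qed

lemma nrm_add_le: "nrm d (\<lambda>l. x l + y l) \<le> nrm d x + nrm d y"
  unfolding nrm_eq_L2_set by (rule L2_set_triangle_ineq)

lemma nrm_scale: "nrm d (\<lambda>l. c * x l) = \<bar>c\<bar> * nrm d x"
  unfolding nrm_eq_L2_set L2_set_def
  by (simp add: power_mult_distrib real_sqrt_mult flip: sum_distrib_left)

lemma nrm_vdiff_commute: "nrm d (vdiff x y) = nrm d (vdiff y x)"
  using nrm_scale[of d "-1" "vdiff x y"] unfolding vdiff_def by simp

lemma nrm_vdiff_self: "nrm d (vdiff x x) = 0"
  by (simp add: nrm_def ip_def vdiff_def)

lemma nrm_vdiff_triangle: "nrm d (vdiff x z) \<le> nrm d (vdiff x y) + nrm d (vdiff y z)"
proof -
  have "vdiff x z = (\<lambda>l. vdiff x y l + vdiff y z l)"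
    by (simp add: vdiff_def fun_eq_iff)
  then show ?thesis using nrm_add_le by metis
qed

lemma nrm_sum_le: "nrm d (\<lambda>l. \<Sum>j\<in>J. v j l) \<le> (\<Sum>j\<in>J. nrm d (v j))"
proof (induction J rule: infinite_finite_induct)
  case (infinite J)
  then show ?case by (simp add: nrm_def ip_def)
next
  case empty
  then show ?case by (simp add: nrm_def ip_def)
next
  case (insert a J)
  then show ?case
    using nrm_add_le[of d "v a" "\<lambda>l. \<Sum>j\<in>J. v j l"] by simp
qed

lemma ip_sum_left: "ip d (\<lambda>l. \<Sum>j\<in>J. v j l) w = (\<Sum>j\<in>J. ip d (v j) w)"
  unfolding ip_def by (simp add: sum_distrib_right sum.swap[of _ J])

lemma ip_scale_left: "ip d (\<lambda>l. c * x l) w = c * ip d x w"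
  unfolding ip_def by (simp add: sum_distrib_left mult.assoc)

lemma ip_diff_left: "ip d (vdiff x y) w = ip d x w - ip d y w"
  unfolding ip_def vdiff_def by (simp add: left_diff_distrib sum_subtractf)

lemma ip_diff_right: "ip d w (vdiff x y) = ip d w x - ip d w y"
  unfolding ip_def vdiff_def by (simp add: right_diff_distrib sum_subtractf)

lemma ip_vdiff_four_points:
  "ip d (vdiff a z) (vdiff a y) + ip d (vdiff c z) (vdiff y c) =
   ip d (vdiff a y) (vdiff a y) / 2 - ip d (vdiff c y) (vdiff c y) / 2
   + ip d (vdiff a z) (vdiff a z) / 2 - ip d (vdiff z c) (vdiff z c) / 2"
  unfolding ip_diff_left ip_diff_right
  by (simp add: field_simps ip_commute[of d z a] ip_commute[of d y a] ip_commute[of d c a]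
      ip_commute[of d y z] ip_commute[of d c z] ip_commute[of d c y])

lemma ip_add_scaled_self:
  "ip d (\<lambda>l. u l + t * v l) (\<lambda>l. u l + t * v l) = ip d u u + 2 * t * ip d u v + t\<^sup>2 * ip d v v"
proof -
  have "(u l + t * v l) * (u l + t * v l) = u l * u l + 2 * t * (u l * v l) + t\<^sup>2 * (v l * v l)" for l
    by (simp add: algebra_simps power2_eq_square)
  then show ?thesis
    unfolding ip_def by (simp add: sum.distrib sum_distrib_left)
qed

lemma vcomb_in_vec: "x \<in> vec d \<Longrightarrow> y \<in> vec d \<Longrightarrow> vcomb a x b y \<in> vec d"
  by (simp add: vec_def vcomb_def)

section \<open>Proximal steps and subgradient inequalities\<close>

lemma nonneg_of_nonneg_add_small_mult:
  fixes u v :: real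
  assumes "\<And>t. 0 < t \<Longrightarrow> t \<le> 1 \<Longrightarrow> 0 \<le> u + t * v"
  shows "0 \<le> u"
proof (rule ccontr)
  assume "\<not> 0 \<le> u"
  define t where "t = min 1 (- u / (2 * \<bar>v\<bar> + 1))"
  have "0 < - u / (2 * \<bar>v\<bar> + 1)"
    using \<open>\<not> 0 \<le> u\<close> by (intro divide_pos_pos) auto
  then have t: "0 < t" "t \<le> 1"
    by (auto simp: t_def)
  have "t \<le> - u / (2 * \<bar>v\<bar> + 1)"
    by (simp add: t_def)
  then have "t * (2 * \<bar>v\<bar> + 1) \<le> - u"
    by (simp add: field_simps add_pos_nonneg)
  moreover have "t * (2 * \<bar>v\<bar> + 1) = 2 * (t * \<bar>v\<bar>) + t"
    by (simp add: algebra_simps)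
  moreover have "t * v \<le> t * \<bar>v\<bar>" "0 \<le> t * \<bar>v\<bar>"
    using t by (simp_all add: mult_left_mono)
  ultimately have "u + t * v < 0"
    using t by linarith
  with assms[OF t] show False
    by simp
qed

lemma prox_minimizer_variational_ineq:
  assumes S: "convex_set d S" and psi: "convex_fun_on S psi" and w: "w \<ge> 0" and eta: "eta > 0"
    and c: "c \<in> S" and x: "x \<in> S"
    and min: "\<forall>y\<in>S. w * psi c + 1 / (2 * eta) * (nrm d (vdiff c z))\<^sup>2
                      \<le> w * psi y + 1 / (2 * eta) * (nrm d (vdiff y z))\<^sup>2"
  shows "0 \<le> ip d (vdiff c z) (vdiff x c) / eta + w * (psi x - psi c)"
proof -
  define IP where "IP = ip d (vdiff c z) (vdiff x c)"
  define N where "N = (nrm d (vdiff x c))\<^sup>2"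
  have "0 \<le> IP / eta + w * (psi x - psi c)"
  proof (rule nonneg_of_nonneg_add_small_mult[where v = "N / (2 * eta)"])
    fix t :: real assume t: "0 < t" "t \<le> 1"
    define yt where "yt = vcomb (1 - t) c t x"
    have "yt \<in> S" using S c x t unfolding convex_set_def yt_def by auto
    have psi_yt: "psi yt \<le> (1 - t) * psi c + t * psi x"
      using psi c x t unfolding convex_fun_on_def yt_def by auto
    have yt_z: "vdiff yt z = (\<lambda>l. vdiff c z l + t * vdiff x c l)"
      by (simp add: yt_def vcomb_def vdiff_def algebra_simps fun_eq_iff)
    have dist_yt: "(nrm d (vdiff yt z))\<^sup>2 = (nrm d (vdiff c z))\<^sup>2 + 2 * t * IP + t\<^sup>2 * N"
      unfolding nrm_power2 yt_z IP_def N_def by (rule ip_add_scaled_self)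
    have "w * psi c + 1 / (2 * eta) * (nrm d (vdiff c z))\<^sup>2
        \<le> w * ((1 - t) * psi c + t * psi x) + 1 / (2 * eta) * (nrm d (vdiff yt z))\<^sup>2"
      using min[rule_format, OF \<open>yt \<in> S\<close>] mult_left_mono[OF psi_yt, of w] w by linarith
    moreover have "w * ((1 - t) * psi c + t * psi x) + 1 / (2 * eta) * (nrm d (vdiff yt z))\<^sup>2
        - (w * psi c + 1 / (2 * eta) * (nrm d (vdiff c z))\<^sup>2)
        = t * (IP / eta + w * (psi x - psi c) + t * (N / (2 * eta)))"
      unfolding dist_yt using eta by (simp add: field_simps power2_eq_square)
    ultimately have "0 \<le> t * (IP / eta + w * (psi x - psi c) + t * (N / (2 * eta)))"
      by linarith
    then show "0 \<le> IP / eta + w * (psi x - psi c) + t * (N / (2 * eta))"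
      using t by (simp add: zero_le_mult_iff)
  qed
  then show ?thesis
    unfolding IP_def .
qed

lemma prox_minimizer_subgrad:
  assumes S: "convex_set d S" and psi: "convex_fun_on S psi"
    and w: "w > 0" and eta: "eta > 0" and c: "c \<in> S" and z: "z \<in> vec d"
    and min: "\<forall>y\<in>S. w * psi c + 1 / (2 * eta) * (nrm d (vdiff c z))\<^sup>2
                      \<le> w * psi y + 1 / (2 * eta) * (nrm d (vdiff y z))\<^sup>2"
  shows "(\<lambda>l. inverse (w * eta) * vdiff z c l) \<in> subgrad d S psi c"
  unfolding subgrad_def
proof (intro CollectI conjI ballI)
  show "c \<in> S" by (fact c)
  show "(\<lambda>l. inverse (w * eta) * vdiff z c l) \<in> vec d"
    using z c S by (auto simp: convex_set_def vec_def vdiff_def)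
  fix x assume x: "x \<in> S"
  define IP where "IP = ip d (vdiff c z) (vdiff x c)"
  have "0 \<le> IP / eta + w * (psi x - psi c)"
    unfolding IP_def using prox_minimizer_variational_ineq[OF S psi less_imp_le[OF w] eta c x min] .
  moreover have "IP / eta + w * (psi x - psi c) = w * (IP / (w * eta) + psi x - psi c)"
    using w by (simp add: field_simps)
  ultimately have "0 \<le> IP / (w * eta) + psi x - psi c"
    using w by (simp add: zero_le_mult_iff)
  moreover have "ip d (\<lambda>l. inverse (w * eta) * vdiff z c l) (vdiff x c) = - IP / (w * eta)"
    unfolding ip_scale_left IP_def ip_diff_left by (simp add: divide_inverse)
  ultimately show "psi c + ip d (\<lambda>l. inverse (w * eta) * vdiff z c l) (vdiff x c) \<le> psi x"
    by simp
qed

lemma prox_step_le: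
  assumes S: "convex_set d S" and psi: "convex_fun_on S psi" and mu: "mu_condition d S psi mu"
    and w: "w > 0" and eta: "eta > 0" and c: "c \<in> S" and z: "z \<in> vec d"
    and min: "\<forall>y\<in>S. w * psi c + 1 / (2 * eta) * (nrm d (vdiff c z))\<^sup>2
                      \<le> w * psi y + 1 / (2 * eta) * (nrm d (vdiff y z))\<^sup>2"
    and y: "y \<in> S"
  shows "w * eta * (psi c - psi y)
           \<le> ip d (vdiff c z) (vdiff y c) - w * eta * mu / 2 * (nrm d (vdiff c y))\<^sup>2"
proof -
  have "mu / 2 * (nrm d (vdiff y c))\<^sup>2
          \<le> psi y - psi c - ip d (\<lambda>l. inverse (w * eta) * vdiff z c l) (vdiff y c)"
    using mu y prox_minimizer_subgrad[OF S psi w eta c z min] unfolding mu_condition_def by blast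
  also have "\<dots> = psi y - psi c + ip d (vdiff c z) (vdiff y c) / (w * eta)"
    unfolding ip_scale_left ip_diff_left by (simp add: divide_inverse algebra_simps)
  finally have "w * eta * (mu / 2 * (nrm d (vdiff c y))\<^sup>2)
          \<le> w * eta * (psi y - psi c + ip d (vdiff c z) (vdiff y c) / (w * eta))"
    using w eta nrm_vdiff_commute by (simp add: mult_left_mono)
  moreover have "w * eta * (psi y - psi c + ip d (vdiff c z) (vdiff y c) / (w * eta))
      = w * eta * (psi y - psi c) + ip d (vdiff c z) (vdiff y c)"
    using w eta by (simp add: field_simps)
  ultimately show ?thesis
    by (simp add: algebra_simps)
qed

lemma subgrad_gap_le:
  assumes gc: "gc \<in> subgrad d V f c" "nrm d gc \<le> L"
    and gx: "g \<in> subgrad d V f x" "nrm d g \<le> L" and y: "y \<in> V"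
  shows "f c - f y \<le> L * (nrm d (vdiff x c) + nrm d (vdiff x a)) + ip d g (vdiff a y)"
proof -
  have "x \<in> V" using gx(1) by (simp add: subgrad_def)
  then have "f c + ip d gc (vdiff x c) \<le> f x" "f x + ip d g (vdiff y x) \<le> f y"
    using gc(1) gx(1) y by (auto simp: subgrad_def)
  moreover have "ip d gc (vdiff c x) \<le> L * nrm d (vdiff x c)"
    using ip_le_nrm_mult[of d gc "vdiff c x"] mult_right_mono[OF gc(2) nrm_nonneg[of d "vdiff c x"]]
    by (simp add: nrm_vdiff_commute)
  moreover have "ip d g (vdiff x a) \<le> L * nrm d (vdiff x a)"
    using ip_le_nrm_mult[of d g "vdiff x a"] mult_right_mono[OF gx(2) nrm_nonneg[of d "vdiff x a"]] by simp
  ultimately show ?thesis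
    unfolding ip_diff_right by (simp add: algebra_simps)
qed

section \<open>One epoch\<close>

locale shuffling_epoch =
  fixes d n :: nat
    and f :: "nat \<Rightarrow> (nat \<Rightarrow> real) \<Rightarrow> real"
    and gf :: "nat \<Rightarrow> (nat \<Rightarrow> real) \<Rightarrow> (nat \<Rightarrow> real)"
    and G :: "nat \<Rightarrow> real"
    and S :: "(nat \<Rightarrow> real) set"
    and psi :: "(nat \<Rightarrow> real) \<Rightarrow> real"
    and mu eta :: real
    and sigma :: "nat \<Rightarrow> nat"
    and xin :: "nat \<Rightarrow> (nat \<Rightarrow> real)"
    and c :: "nat \<Rightarrow> real"
  assumes n_pos: "n \<ge> 1" and eta_pos: "eta > 0"
    and S_convex: "convex_set d S" and psi_convex: "convex_fun_on S psi"
    and psi_mu: "mu_condition d S psi mu"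
    and gf_subgrad: "\<forall>i\<in>{1..n}. \<forall>x\<in>vec d. gf i x \<in> subgrad d (vec d) (f i) x"
    and gf_bounded: "\<forall>i\<in>{1..n}. \<forall>x\<in>vec d. nrm d (gf i x) \<le> G i"
    and perm: "bij_betw sigma {1..n} {1..n}"
    and start_in: "xin 1 \<in> S"
    and inner_step: "\<forall>i\<in>{1..n}. xin (Suc i) = vcomb 1 (xin i) (- eta) (gf (sigma i) (xin i))"
    and prox_in: "c \<in> S"
    and prox_min: "\<forall>y\<in>S. real n * psi c + 1 / (2 * eta) * (nrm d (vdiff c (xin (Suc n))))\<^sup>2
                    \<le> real n * psi y + 1 / (2 * eta) * (nrm d (vdiff y (xin (Suc n))))\<^sup>2"
begin

abbreviation F :: "(nat \<Rightarrow> real) \<Rightarrow> real" where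
  "F x \<equiv> (\<Sum>i=1..n. f i x) / real n + psi x"

abbreviation grad :: "nat \<Rightarrow> nat \<Rightarrow> real" where
  "grad j \<equiv> gf (sigma j) (xin j)"

abbreviation Gsum :: real where
  "Gsum \<equiv> \<Sum>i=1..n. G i"

lemma S_subset_vec: "S \<subseteq> vec d"
  using S_convex by (simp add: convex_set_def)

lemma perm_mem: "j \<in> {1..n} \<Longrightarrow> sigma j \<in> {1..n}"
  using perm by (meson bij_betwE)

lemma G_nonneg: "i \<in> {1..n} \<Longrightarrow> 0 \<le> G i"
  using gf_bounded nrm_nonneg[of d "gf i (\<lambda>_. 0)"] by (force simp: vec_def)

lemma sum_G_perm: "(\<Sum>j=1..n. G (sigma j)) = Gsum"
  using sum.reindex_bij_betw[OF perm] .

lemma iterate_in_vec: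
  assumes "1 \<le> j" "j \<le> Suc n"
  shows "xin j \<in> vec d"
  using assms(1)
proof (induction j rule: dec_induct)
  case base
  show ?case using start_in S_subset_vec by blast
next
  case (step k)
  then have "k \<in> {1..n}" using assms(2) by simp
  then show ?case
    using inner_step gf_subgrad perm_mem step.IH vcomb_in_vec by (simp add: subgrad_def)
qed

lemma grad_subgrad:
  assumes "j \<in> {1..n}"
  shows "grad j \<in> subgrad d (vec d) (f (sigma j)) (xin j)" "nrm d (grad j) \<le> G (sigma j)"
  using assms gf_subgrad gf_bounded perm_mem iterate_in_vec[of j] by auto

lemma start_minus_iterate:
  assumes "1 \<le> j" "j \<le> Suc n"
  shows "vdiff (xin 1) (xin j) = (\<lambda>l. eta * (\<Sum>k\<in>{1..<j}. grad k l))"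
  using assms(1)
proof (induction j rule: dec_induct)
  case base
  show ?case by (simp add: vdiff_def)
next
  case (step k)
  then have "xin (Suc k) = vcomb 1 (xin k) (- eta) (grad k)"
    using inner_step assms(2) by simp
  then show ?case
    using step.IH step.hyps(1)
    by (simp add: vcomb_def vdiff_def fun_eq_iff algebra_simps sum.atLeastLessThan_Suc)
qed

lemma dist_start_iterate_le:
  assumes "1 \<le> j" "j \<le> Suc n"
  shows "nrm d (vdiff (xin 1) (xin j)) \<le> eta * Gsum"
proof -
  have "nrm d (vdiff (xin 1) (xin j)) = eta * nrm d (\<lambda>l. \<Sum>k\<in>{1..<j}. grad k l)"
    using start_minus_iterate[OF assms] eta_pos by (simp add: nrm_scale)
  also have "\<dots> \<le> eta * (\<Sum>k\<in>{1..<j}. G (sigma k))"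
    using eta_pos assms grad_subgrad(2)
    by (intro mult_left_mono order.trans[OF nrm_sum_le] sum_mono) auto
  also have "\<dots> \<le> eta * (\<Sum>k=1..n. G (sigma k))"
    using eta_pos assms G_nonneg perm_mem by (intro mult_left_mono sum_mono2) auto
  finally show ?thesis
    unfolding sum_G_perm .
qed

lemma sum_f_gap_le:
  assumes y: "y \<in> S"
  shows "(\<Sum>i=1..n. f i c) - (\<Sum>i=1..n. f i y)
           \<le> Gsum * (3 * eta * Gsum + nrm d (vdiff (xin (Suc n)) c))
             + ip d (vdiff (xin 1) (xin (Suc n))) (vdiff (xin 1) y) / eta"
proof -
  let ?a = "xin 1" and ?z = "xin (Suc n)"
  define R where "R = nrm d (vdiff ?z c)"
  have c_vec: "c \<in> vec d" and y_vec: "y \<in> vec d"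
    using prox_in y S_subset_vec by auto
  have gap: "f (sigma j) c - f (sigma j) y \<le> G (sigma j) * (3 * eta * Gsum + R) + ip d (grad j) (vdiff ?a y)"
    if j: "j \<in> {1..n}" for j
  proof -
    have a_j: "nrm d (vdiff (xin j) ?a) \<le> eta * Gsum"
      using dist_start_iterate_le[of j] j by (simp add: nrm_vdiff_commute)
    have "nrm d (vdiff (xin j) c) \<le> nrm d (vdiff (xin j) ?a) + (nrm d (vdiff ?a ?z) + R)"
      unfolding R_def by (meson nrm_vdiff_triangle add_left_mono order.trans)
    also have "\<dots> \<le> 2 * eta * Gsum + R"
      using a_j dist_start_iterate_le[of "Suc n"] by simp
    finally have "nrm d (vdiff (xin j) c) + nrm d (vdiff (xin j) ?a) \<le> 3 * eta * Gsum + R"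
      using a_j by simp
    moreover have "f (sigma j) c - f (sigma j) y
        \<le> G (sigma j) * (nrm d (vdiff (xin j) c) + nrm d (vdiff (xin j) ?a)) + ip d (grad j) (vdiff ?a y)"
      using j c_vec y_vec gf_subgrad gf_bounded perm_mem grad_subgrad
      by (intro subgrad_gap_le) auto
    ultimately show ?thesis
      using G_nonneg[OF perm_mem[OF j]] by (smt (verit) mult_left_mono)
  qed
  have "(\<Sum>i=1..n. f i c) - (\<Sum>i=1..n. f i y) = (\<Sum>j=1..n. f (sigma j) c - f (sigma j) y)"
    using sum.reindex_bij_betw[OF perm, of "\<lambda>i. f i c"] sum.reindex_bij_betw[OF perm, of "\<lambda>i. f i y"]
    by (simp add: sum_subtractf)
  also have "\<dots> \<le> (\<Sum>j=1..n. G (sigma j) * (3 * eta * Gsum + R) + ip d (grad j) (vdiff ?a y))"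
    using gap by (rule sum_mono)
  also have "\<dots> = Gsum * (3 * eta * Gsum + R) + ip d (vdiff ?a ?z) (vdiff ?a y) / eta"
    using start_minus_iterate[of "Suc n"] eta_pos sum_G_perm
    by (simp add: sum.distrib ip_scale_left ip_sum_left atLeastLessThanSuc_atLeastAtMost
        flip: sum_distrib_right sum_G_perm)
  finally show ?thesis
    unfolding R_def .
qed

lemma epoch_le:
  assumes y: "y \<in> S"
  shows "real n * eta * (F c - F y)
           \<le> (nrm d (vdiff (xin 1) y))\<^sup>2 / 2 - (1 + real n * eta * mu) / 2 * (nrm d (vdiff c y))\<^sup>2
             + 4 * eta\<^sup>2 * Gsum\<^sup>2"
proof -
  let ?a = "xin 1" and ?z = "xin (Suc n)"
  define R where "R = nrm d (vdiff ?z c)"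
  define r where "r = eta * Gsum"
  have "real n * eta * (F c - F y)
      = eta * ((\<Sum>i=1..n. f i c) - (\<Sum>i=1..n. f i y)) + real n * eta * (psi c - psi y)"
    using n_pos by (simp add: field_simps)
  moreover have "eta * ((\<Sum>i=1..n. f i c) - (\<Sum>i=1..n. f i y))
      \<le> 3 * r\<^sup>2 + r * R + ip d (vdiff ?a ?z) (vdiff ?a y)"
    using mult_left_mono[OF sum_f_gap_le[OF y], of eta] eta_pos
    by (simp add: r_def R_def power2_eq_square algebra_simps)
  moreover have "real n * eta * (psi c - psi y)
      \<le> ip d (vdiff c ?z) (vdiff y c) - real n * eta * mu / 2 * (nrm d (vdiff c y))\<^sup>2"
    using n_pos eta_pos iterate_in_vec[of "Suc n"] y
    by (intro prox_step_le[OF S_convex psi_convex psi_mu _ _ prox_in _ prox_min]) auto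
  moreover have "ip d (vdiff ?a ?z) (vdiff ?a y) + ip d (vdiff c ?z) (vdiff y c)
      = (nrm d (vdiff ?a y))\<^sup>2 / 2 - (nrm d (vdiff c y))\<^sup>2 / 2 + (nrm d (vdiff ?a ?z))\<^sup>2 / 2 - R\<^sup>2 / 2"
    unfolding R_def nrm_power2 by (rule ip_vdiff_four_points)
  moreover have "(nrm d (vdiff ?a ?z))\<^sup>2 \<le> r\<^sup>2"
    using dist_start_iterate_le[of "Suc n"] nrm_nonneg unfolding r_def by (intro power_mono) auto
  moreover have "r * R - R\<^sup>2 / 2 \<le> r\<^sup>2 / 2"
    using zero_le_power2[of "R - r"] by (simp add: power2_eq_square algebra_simps)
  ultimately show ?thesis
    unfolding r_def by (simp add: power_mult_distrib field_simps)
qed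

end

section \<open>Last iterates of weighted telescoping sums\<close>

lemma weighted_telescoping_le:
  fixes p u \<alpha> \<beta> e :: "nat \<Rightarrow> real"
  assumes shift: "\<And>k. k \<in> {j..<K} \<Longrightarrow> p (Suc k) * \<alpha> (Suc k) = p k * \<beta> k"
    and step: "\<And>k. k \<in> {j..K} \<Longrightarrow> u k \<le> \<alpha> k - \<beta> k + e k"
    and p_nonneg: "\<And>k. p k \<ge> 0" and "j \<le> K"
  shows "(\<Sum>k=j..K. p k * u k) \<le> p j * \<alpha> j - p K * \<beta> K + (\<Sum>k=j..K. p k * e k)"
  using \<open>j \<le> K\<close> shift step
proof (induction K rule: dec_induct)
  case base
  then show ?case
    using mult_left_mono[OF base(2)[of j] p_nonneg[of j]] by (simp add: algebra_simps)
next
  case (step q)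
  have "p (Suc q) * u (Suc q) \<le> p (Suc q) * \<alpha> (Suc q) - p (Suc q) * \<beta> (Suc q) + p (Suc q) * e (Suc q)"
    using mult_left_mono[OF step.prems(2)[of "Suc q"] p_nonneg[of "Suc q"]] step.hyps
    by (simp add: algebra_simps)
  moreover have "p (Suc q) * \<alpha> (Suc q) = p q * \<beta> q"
    using step.prems(1) step.hyps by simp
  ultimately show ?case
    using step.IH step.prems step.hyps by simp
qed

lemma nondecreasing_div_suffix_sum_le:
  fixes p :: "nat \<Rightarrow> real"
  assumes p_pos: "\<And>k. p k > 0" and p_mono: "\<And>k. p k \<le> p (Suc k)" and "j \<le> K"
  shows "p j / (\<Sum>k=j..K. p k) \<le> 1 / (real K + 1 - real j)"
proof -
  have "(\<Sum>k=j..K. p j) \<le> (\<Sum>k=j..K. p k)"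
    using lift_Suc_mono_le[of p] p_mono by (intro sum_mono) auto
  then have "(real K + 1 - real j) * p j \<le> (\<Sum>k=j..K. p k)"
    using assms(3) by (auto simp: of_nat_diff algebra_simps)
  moreover have "(\<Sum>k=j..K. p k) > 0"
    using p_pos assms(3) by (intro sum_pos) auto
  ultimately show ?thesis
    using assms(3) by (simp add: divide_simps mult.commute)
qed

lemma suffix_average_step:
  fixes P P' A A' p h Q :: real
  assumes "P = p + P'" "A = p * h + A'" "A' - Q \<le> P' * h" "p > 0" "P' > 0"
  shows "A' / P' \<le> A / P + p * Q / (P * P')"
proof -
  have "P > 0"
    using assms(1,4,5) by simp
  have "p * (A' - Q) \<le> p * (P' * h)"
    using assms(3,4) by (intro mult_left_mono) auto
  then have "A' * P \<le> A * P' + p * Q"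
    using assms(1,2) by (simp add: algebra_simps)
  then have "A' * P / (P * P') \<le> (A * P' + p * Q) / (P * P')"
    using \<open>P > 0\<close> assms(5) by (intro divide_right_mono) auto
  then show ?thesis
    using \<open>P > 0\<close> assms(5) by (simp add: add_divide_distrib)
qed

lemma harmonic_le_one_plus_ln:
  assumes "K \<ge> 1"
  shows "(\<Sum>k=1..K. 1 / real k) \<le> 1 + ln (real K)"
  using assms
proof (induction K rule: dec_induct)
  case base
  then show ?case by simp
next
  case (step K)
  have "ln (real K / (real K + 1)) \<le> real K / (real K + 1) - 1"
    using step.hyps by (intro ln_le_minus_one) auto
  moreover have "ln (real K / (real K + 1)) = ln (real K) - ln (real K + 1)"
    using step.hyps by (simp add: ln_div)
  moreover have "real K / (real K + 1) - 1 = - 1 / (real K + 1)"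
    by (simp add: field_simps)
  ultimately show ?case
    using step.IH by (simp add: add.commute)
qed

lemma ln_two_ge_half: "ln (2::real) \<ge> 1 / 2"
  using ln_le_minus_one[of "1 / 2 :: real"] by (simp add: ln_div)

lemma sum_inverse_mult_reflect_le:
  assumes "K \<ge> 2"
  shows "(\<Sum>k=1..K. 1 / (real k * (real K + 1 - real k))) \<le> 6 * ln (real K) / real K"
proof -
  define H where "H = (\<Sum>k=1..K. 1 / real k)"
  have partial_fractions: "1 / (x * y) = (1 / x + 1 / y) / (x + y)" if "x > 0" "y > 0" for x y :: real
  proof -
    have "1 / x + 1 / y = (x + y) / (x * y)"
      using that by (simp add: field_simps)
    then show ?thesis
      using that by simp
  qed
  have "1 / (real k * (real K + 1 - real k)) = (1 / real k + 1 / (real K + 1 - real k)) / (real K + 1)"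
    if "k \<in> {1..K}" for k
    using that partial_fractions[of "real k" "real K + 1 - real k"] by simp
  then have "(\<Sum>k=1..K. 1 / (real k * (real K + 1 - real k)))
      = (\<Sum>k=1..K. (1 / real k + 1 / (real K + 1 - real k)) / (real K + 1))"
    by (intro sum.cong) auto
  also have "\<dots> = 2 * H / (real K + 1)"
  proof -
    have "(\<Sum>k=1..K. 1 / (real K + 1 - real k)) = (\<Sum>k=1..K. 1 / real (K + 1 - k))"
      by (intro sum.cong) (auto simp: of_nat_diff)
    also have "\<dots> = H"
      unfolding H_def by (rule sum.atLeastAtMost_rev[symmetric])
    finally show ?thesis
      unfolding sum_divide_distrib[symmetric] sum.distrib H_def by simp
  qed
  also have "\<dots> \<le> 2 * H / real K"
    using assms unfolding H_def by (intro divide_left_mono) (auto intro: sum_nonneg)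
  also have "\<dots> \<le> 2 * (3 * ln (real K)) / real K"
  proof -
    have "ln 2 \<le> ln (real K)" "H \<le> 1 + ln (real K)"
      using assms harmonic_le_one_plus_ln[of K] unfolding H_def by simp_all
    then have "H \<le> 3 * ln (real K)"
      using ln_two_ge_half by linarith
    then show ?thesis by (intro divide_right_mono) auto
  qed
  finally show ?thesis by simp
qed

lemma last_iterate_le_suffix_averages:
  fixes h p :: "nat \<Rightarrow> real" and c :: real
  assumes K: "K \<ge> 1" and p_pos: "\<And>k. p k > 0"
    and later: "\<And>j. j \<in> {2..K} \<Longrightarrow> (\<Sum>k=j..K. p k * (h (Suc k) - h j)) \<le> c * (\<Sum>k=j..K. p k / real k)"
  shows "h (Suc K) \<le> (\<Sum>k=1..K. p k * h (Suc k)) / (\<Sum>k=1..K. p k)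
           + (\<Sum>i=1..<K. p i * (c * (\<Sum>k=Suc i..K. p k / real k))
                            / ((\<Sum>k=i..K. p k) * (\<Sum>k=Suc i..K. p k)))"
proof -
  define P where "P j = (\<Sum>k=j..K. p k)" for j
  define A where "A j = (\<Sum>k=j..K. p k * h (Suc k))" for j
  define Q where "Q j = c * (\<Sum>k=j..K. p k / real k)" for j
  have P_pos: "P j > 0" if "j \<le> K" for j
    unfolding P_def using p_pos that by (intro sum_pos) auto
  have avg_step: "A (Suc j) / P (Suc j) \<le> A j / P j + p j * Q (Suc j) / (P j * P (Suc j))"
    if "1 \<le> j" "j < K" for j
  proof (rule suffix_average_step)
    show "P j = p j + P (Suc j)" "A j = p j * h (Suc j) + A (Suc j)"
      using that unfolding P_def A_def by (simp_all add: sum.atLeast_Suc_atMost)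
    show "A (Suc j) - Q (Suc j) \<le> P (Suc j) * h (Suc j)"
      using later[of "Suc j"] that
      by (simp add: A_def P_def Q_def right_diff_distrib sum_subtractf sum_distrib_right)
  qed (use that p_pos P_pos in auto)
  have "A j / P j \<le> A 1 / P 1 + (\<Sum>i=1..<j. p i * Q (Suc i) / (P i * P (Suc i)))"
    if "1 \<le> j" "j \<le> K" for j
    using that
  proof (induction j rule: dec_induct)
    case (step q)
    then show ?case
      using avg_step[of q] by simp
  qed simp
  from this[of K] show ?thesis
    using K p_pos[of K] by (simp add: A_def P_def Q_def)
qed

lemma weighted_harmonic_le:
  fixes p :: "nat \<Rightarrow> real"
  assumes p_pos: "\<And>k. p k > 0" and p_mono: "\<And>k. p k \<le> p (Suc k)"
  shows "(\<Sum>k=1..K. p k / real k)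
           \<le> (\<Sum>k=1..K. p k) * (\<Sum>k=1..K. 1 / (real k * (real K + 1 - real k)))"
  unfolding sum_distrib_left
proof (rule sum_mono)
  fix k assume k: "k \<in> {1..K}"
  have "p k \<le> (\<Sum>j=k..K. p j) / (real K + 1 - real k)"
    using nondecreasing_div_suffix_sum_le[of p k K, OF p_pos p_mono] sum_pos[of "{k..K}" p] p_pos k
    by (simp add: divide_simps)
  also have "\<dots> \<le> (\<Sum>j=1..K. p j) / (real K + 1 - real k)"
    using k p_pos by (intro divide_right_mono sum_mono2) (auto intro: less_imp_le)
  finally show "p k / real k \<le> (\<Sum>j=1..K. p j) * (1 / (real k * (real K + 1 - real k)))"
    using k by (simp add: divide_simps)
qed

lemma suffix_correction_le:
  fixes p :: "nat \<Rightarrow> real" and c :: real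
  assumes p_pos: "\<And>k. p k > 0" and p_mono: "\<And>k. p k \<le> p (Suc k)" and c: "c \<ge> 0"
  shows "(\<Sum>i=1..<K. p i * (c * (\<Sum>k=Suc i..K. p k / real k))
                     / ((\<Sum>k=i..K. p k) * (\<Sum>k=Suc i..K. p k)))
           \<le> c * (\<Sum>k=1..K. 1 / (real k * (real K + 1 - real k)))"
proof -
  have "p i * (c * (\<Sum>k=Suc i..K. p k / real k)) / ((\<Sum>k=i..K. p k) * (\<Sum>k=Suc i..K. p k))
      \<le> c * (1 / (real i * (real K + 1 - real i)))"
    if "1 \<le> i" "i < K" for i
  proof -
    define P where "P j = (\<Sum>k=j..K. p k)" for j
    have P_pos: "P i > 0" "P (Suc i) > 0"
      unfolding P_def using p_pos that by (auto intro!: sum_pos)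
    have "(\<Sum>k=Suc i..K. p k / real k) \<le> (\<Sum>k=Suc i..K. p k / real i)"
      using p_pos that by (intro sum_mono divide_left_mono) (auto intro: less_imp_le)
    then have Q_le: "c * (\<Sum>k=Suc i..K. p k / real k) \<le> c * (P (Suc i) / real i)"
      unfolding P_def using c by (simp add: sum_divide_distrib mult_left_mono)
    have "p i * (c * (\<Sum>k=Suc i..K. p k / real k)) / (P i * P (Suc i))
        \<le> p i * (c * (P (Suc i) / real i)) / (P i * P (Suc i))"
      using P_pos p_pos[of i] by (intro divide_right_mono mult_left_mono[OF Q_le]) auto
    also have "\<dots> = c * (p i / P i) / real i"
      using P_pos by (simp add: field_simps)
    also have "\<dots> \<le> c * (1 / (real K + 1 - real i)) / real i"
      using nondecreasing_div_suffix_sum_le[of p i K, OF p_pos p_mono] that c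
      unfolding P_def by (intro divide_right_mono mult_left_mono) auto
    finally show ?thesis
      unfolding P_def by (simp add: mult.commute)
  qed
  then have "(\<Sum>i=1..<K. p i * (c * (\<Sum>k=Suc i..K. p k / real k))
                     / ((\<Sum>k=i..K. p k) * (\<Sum>k=Suc i..K. p k)))
      \<le> (\<Sum>i=1..K. c * (1 / (real i * (real K + 1 - real i))))"
    using c by (intro order.trans[OF sum_mono sum_mono2]) auto
  then show ?thesis
    by (simp add: sum_distrib_left)
qed

lemma last_iterate_le:
  fixes h p :: "nat \<Rightarrow> real" and B c :: real
  assumes K: "K \<ge> 2" and p_pos: "\<And>k. p k > 0" and p_mono: "\<And>k. p k \<le> p (Suc k)" and c: "c \<ge> 0"
    and first: "(\<Sum>k=1..K. p k * h (Suc k)) \<le> B + c * (\<Sum>k=1..K. p k / real k)"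
    and later: "\<And>j. j \<in> {2..K} \<Longrightarrow> (\<Sum>k=j..K. p k * (h (Suc k) - h j)) \<le> c * (\<Sum>k=j..K. p k / real k)"
  shows "h (Suc K) \<le> B / (\<Sum>k=1..K. p k) + 12 * c * ln (real K) / real K"
proof -
  define P where "P = (\<Sum>k=1..K. p k)"
  define S where "S = (\<Sum>k=1..K. 1 / (real k * (real K + 1 - real k)))"
  have "P > 0"
    unfolding P_def using p_pos K by (intro sum_pos) auto
  have "h (Suc K) \<le> (\<Sum>k=1..K. p k * h (Suc k)) / P + c * S"
    using last_iterate_le_suffix_averages[of K p h c] suffix_correction_le[of p c K, OF p_pos p_mono c] K p_pos later
    unfolding P_def S_def by fastforce
  also have "\<dots> \<le> (B + c * (P * S)) / P + c * S"
    using first weighted_harmonic_le[of p K, OF p_pos p_mono] c \<open>P > 0\<close>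
    unfolding P_def S_def by (intro add_right_mono divide_right_mono order.trans[OF first]) (auto intro: mult_left_mono)
  also have "\<dots> = B / P + 2 * (c * S)"
    using \<open>P > 0\<close> by (simp add: field_simps)
  also have "\<dots> \<le> B / P + 12 * c * ln (real K) / real K"
    using mult_left_mono[OF sum_inverse_mult_reflect_le[OF K] c] unfolding S_def by simp
  finally show ?thesis
    unfolding P_def .
qed

section \<open>The rate\<close>

definition binomial_weight :: "nat \<Rightarrow> nat \<Rightarrow> real" where
  "binomial_weight m k = real ((k + m - 1) choose k)"

lemma binomial_weight_Suc:
  assumes "m \<ge> 1"
  shows "binomial_weight m (Suc k) * (real k + 1) = binomial_weight m k * (real k + real m)"
proof -
  have "Suc (k + m - 1) * ((k + m - 1) choose k) = (Suc (k + m - 1) choose Suc k) * Suc k"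
    by (rule Suc_times_binomial_eq)
  moreover have "Suc (k + m - 1) = Suc k + m - 1" "Suc (k + m - 1) = k + m"
    using assms by simp_all
  ultimately have "real ((k + m) * ((k + m - 1) choose k)) = real ((Suc k + m - 1 choose Suc k) * Suc k)"
    by metis
  then show ?thesis
    unfolding binomial_weight_def by (simp add: algebra_simps)
qed

lemma binomial_weight_pos: "m \<ge> 1 \<Longrightarrow> binomial_weight m k > 0"
  by (simp add: binomial_weight_def)

lemma binomial_weight_mono:
  assumes "m \<ge> 1"
  shows "binomial_weight m k \<le> binomial_weight m (Suc k)"
proof -
  have "binomial_weight m k * (real k + 1) \<le> binomial_weight m k * (real k + real m)"
    using assms less_imp_le[OF binomial_weight_pos[OF assms]] by (intro mult_left_mono) auto
  then show ?thesis
    unfolding binomial_weight_Suc[OF assms, symmetric]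
    by (simp add: mult_le_cancel_right_pos add_pos_nonneg)
qed

lemma binomial_weight_one: "m \<ge> 1 \<Longrightarrow> binomial_weight m 1 = real m"
  by (simp add: binomial_weight_def)

lemma sum_binomial_weight:
  assumes "m \<ge> 1"
  shows "(\<Sum>k=1..K. binomial_weight m k) = real ((K + m) choose m) - 1"
proof -
  have "(\<Sum>k\<le>K. (m - 1 + k) choose k) = Suc (m - 1 + K) choose K"
    by (rule sum_choose_lower)
  also have "\<dots> = (K + m) choose m"
    using assms binomial_symmetric[of K "K + m"] by (simp add: add.commute)
  finally have "1 + (\<Sum>k=1..K. (k + m - 1) choose k) = (K + m) choose m"
    using assms by (simp add: atMost_atLeast0 sum.atLeast_Suc_atMost add.commute)
  then show ?thesis
    unfolding binomial_weight_def by (simp flip: of_nat_sum)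
qed

lemma choose_le_two_sum_binomial_weight:
  assumes "m \<ge> 1" "K \<ge> 1"
  shows "real ((K + m) choose m) \<le> 2 * (\<Sum>k=1..K. binomial_weight m k)"
proof -
  have "1 \<le> binomial_weight m 1"
    using assms(1) binomial_weight_one[OF assms(1)] by simp
  also have "\<dots> \<le> (\<Sum>k=1..K. binomial_weight m k)"
    using assms binomial_weight_pos[OF assms(1)] by (intro member_le_sum less_imp_le) auto
  finally show ?thesis
    using sum_binomial_weight[OF assms(1), of K] by simp
qed

locale prox_shuffling =
  fixes d n :: nat
    and f :: "nat \<Rightarrow> (nat \<Rightarrow> real) \<Rightarrow> real"
    and gf :: "nat \<Rightarrow> (nat \<Rightarrow> real) \<Rightarrow> (nat \<Rightarrow> real)"
    and G :: "nat \<Rightarrow> real"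
    and S :: "(nat \<Rightarrow> real) set"
    and psi :: "(nat \<Rightarrow> real) \<Rightarrow> real"
    and mu :: real
    and m K :: nat
    and sigma :: "nat \<Rightarrow> nat \<Rightarrow> nat"
    and xs :: "nat \<Rightarrow> (nat \<Rightarrow> real)"
    and xin :: "nat \<Rightarrow> nat \<Rightarrow> (nat \<Rightarrow> real)"
  assumes n_pos: "n \<ge> 1" and m_pos: "m \<ge> 1" and K_ge: "K \<ge> 2"
    and gf_subgrad: "\<forall>i\<in>{1..n}. \<forall>x\<in>vec d. gf i x \<in> subgrad d (vec d) (f i) x"
    and subgrad_bounded: "\<forall>i\<in>{1..n}. \<forall>x\<in>vec d. \<forall>g\<in>subgrad d (vec d) (f i) x. nrm d g \<le> G i"
    and psi_pcc: "proper_closed_convex d S psi"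
    and psi_mu: "mu_condition d S psi mu" and mu_pos: "mu > 0"
    and run: "prox_shuffling_run d n gf S psi K (\<lambda>k. real m / (real n * mu * real k)) sigma xs xin"
begin

abbreviation F :: "(nat \<Rightarrow> real) \<Rightarrow> real" where
  "F x \<equiv> (\<Sum>i=1..n. f i x) / real n + psi x"

abbreviation eta :: "nat \<Rightarrow> real" where
  "eta k \<equiv> real m / (real n * mu * real k)"

abbreviation Gbar :: real where
  "Gbar \<equiv> (\<Sum>i=1..n. G i) / real n"

abbreviation dist2 :: "(nat \<Rightarrow> real) \<Rightarrow> nat \<Rightarrow> real" where
  "dist2 y k \<equiv> (nrm d (vdiff (xs k) y))\<^sup>2"

lemma iterate_in: "k \<in> {1..Suc K} \<Longrightarrow> xs k \<in> S"
  using run unfolding prox_shuffling_run_def by (cases k) (auto simp: le_Suc_eq)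

lemma epoch:
  assumes k: "k \<in> {1..K}"
  shows "shuffling_epoch d n f gf G S psi mu (eta k) (sigma k) (xin k) (xs (Suc k))"
proof -
  have run_k: "bij_betw (sigma k) {1..n} {1..n} \<and> xin k 1 = xs k \<and>
      (\<forall>i\<in>{1..n}. xin k (Suc i) = vcomb 1 (xin k i) (- eta k) (gf (sigma k i) (xin k i))) \<and>
      xs (Suc k) \<in> S \<and>
      (\<forall>y\<in>S. real n * psi (xs (Suc k)) + 1 / (2 * eta k) * (nrm d (vdiff (xs (Suc k)) (xin k (Suc n))))\<^sup>2
               \<le> real n * psi y + 1 / (2 * eta k) * (nrm d (vdiff y (xin k (Suc n))))\<^sup>2)"
    using run k unfolding prox_shuffling_run_def by blast
  have "xs k \<in> S"
    using iterate_in k by simp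
  show ?thesis
  proof unfold_locales
  show "eta k > 0"
    using k n_pos m_pos mu_pos by simp
  show "\<forall>i\<in>{1..n}. \<forall>x\<in>vec d. nrm d (gf i x) \<le> G i"
    using gf_subgrad subgrad_bounded by blast
  qed (use k n_pos psi_pcc psi_mu gf_subgrad run_k \<open>xs k \<in> S\<close>
        in \<open>auto simp only: proper_closed_convex_def atLeastAtMost_iff\<close>)
qed

lemma epoch_le:
  assumes k: "k \<in> {1..K}" and y: "y \<in> S"
  shows "real m * (F (xs (Suc k)) - F y)
           \<le> mu * real k / 2 * dist2 y k - mu * (real k + real m) / 2 * dist2 y (Suc k)
             + real m * (4 * real m * Gbar\<^sup>2 / mu) / real k"
proof -
  interpret E: shuffling_epoch d n f gf G S psi mu "eta k" "sigma k" "xin k" "xs (Suc k)"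
    by (rule epoch[OF k])
  have start: "xin k 1 = xs k"
    using run k unfolding prox_shuffling_run_def by auto
  have k_pos: "real k > 0" and n_real: "real n > 0"
    using k n_pos by auto
  have "mu * real k * (real n * eta k * (F (xs (Suc k)) - F y))
      \<le> mu * real k * ((nrm d (vdiff (xs k) y))\<^sup>2 / 2
          - (1 + real n * eta k * mu) / 2 * (nrm d (vdiff (xs (Suc k)) y))\<^sup>2
          + 4 * (eta k)\<^sup>2 * (\<Sum>i=1..n. G i)\<^sup>2)"
    using E.epoch_le[OF y] start mu_pos k_pos by (intro mult_left_mono) auto
  also have "\<dots> = mu * real k / 2 * dist2 y k - mu * (real k + real m) / 2 * dist2 y (Suc k)
      + real m * (4 * real m * Gbar\<^sup>2 / mu) / real k"
    using k_pos n_real mu_pos by (simp add: field_simps power2_eq_square)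
  also have "mu * real k * (real n * eta k * (F (xs (Suc k)) - F y)) = real m * (F (xs (Suc k)) - F y)"
    using k_pos n_real mu_pos by (simp add: field_simps)
  finally show ?thesis .
qed

lemma weighted_suffix_le:
  assumes j: "1 \<le> j" "j \<le> K" and y: "y \<in> S"
  shows "(\<Sum>k=j..K. binomial_weight m k * (F (xs (Suc k)) - F y))
           \<le> binomial_weight m j * (mu * real j / 2 * dist2 y j) / real m
             + 4 * real m * Gbar\<^sup>2 / mu * (\<Sum>k=j..K. binomial_weight m k / real k)"
proof -
  let ?p = "binomial_weight m" and ?c = "4 * real m * Gbar\<^sup>2 / mu"
  have p_nonneg: "?p k \<ge> 0" for k
    using binomial_weight_pos[OF m_pos] less_imp_le by blast
  have "(\<Sum>k=j..K. ?p k * (real m * (F (xs (Suc k)) - F y)))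
      \<le> ?p j * (mu * real j / 2 * dist2 y j) - ?p K * (mu * (real K + real m) / 2 * dist2 y (Suc K))
        + (\<Sum>k=j..K. ?p k * (real m * ?c / real k))"
  proof (rule weighted_telescoping_le[OF _ _ p_nonneg j(2)])
    fix k
    have "?p (Suc k) * (mu * real (Suc k) / 2 * dist2 y (Suc k))
        = (?p (Suc k) * (real k + 1)) * (mu / 2 * dist2 y (Suc k))"
      by (simp add: algebra_simps)
    also have "\<dots> = ?p k * (mu * (real k + real m) / 2 * dist2 y (Suc k))"
      unfolding binomial_weight_Suc[OF m_pos] by (simp add: algebra_simps)
    finally show "?p (Suc k) * (mu * real (Suc k) / 2 * dist2 y (Suc k))
        = ?p k * (mu * (real k + real m) / 2 * dist2 y (Suc k))" .
  next
    fix k assume "k \<in> {j..K}"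
    then show "real m * (F (xs (Suc k)) - F y)
        \<le> mu * real k / 2 * dist2 y k - mu * (real k + real m) / 2 * dist2 y (Suc k) + real m * ?c / real k"
      using epoch_le[OF _ y, of k] j by simp
  qed
  moreover have "?p K * (mu * (real K + real m) / 2 * dist2 y (Suc K)) \<ge> 0"
    using p_nonneg mu_pos by simp
  moreover have "(\<Sum>k=j..K. ?p k * (real m * (F (xs (Suc k)) - F y)))
      = real m * (\<Sum>k=j..K. ?p k * (F (xs (Suc k)) - F y))"
    by (simp add: sum_distrib_left mult.left_commute)
  moreover have "(\<Sum>k=j..K. ?p k * (real m * ?c / real k)) = real m * (?c * (\<Sum>k=j..K. ?p k / real k))"
    unfolding sum_distrib_left by (intro sum.cong) (simp_all add: mult_ac)
  moreover have "?p j * (mu * real j / 2 * dist2 y j)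
      = real m * (?p j * (mu * real j / 2 * dist2 y j) / real m)"
    using m_pos by simp
  ultimately have "real m * (\<Sum>k=j..K. ?p k * (F (xs (Suc k)) - F y))
      \<le> real m * (?p j * (mu * real j / 2 * dist2 y j) / real m + ?c * (\<Sum>k=j..K. ?p k / real k))"
    unfolding distrib_left by linarith
  then show ?thesis
    using m_pos by simp
qed

lemma last_iterate_rate:
  assumes xstar: "xstar \<in> S"
  shows "F (xs (Suc K)) - F xstar
           \<le> 48 * (mu * (nrm d (vdiff xstar (xs 1)))\<^sup>2 / real ((K + m) choose m)
                   + Gbar\<^sup>2 * real m * ln (real K) / (mu * real K))"
proof -
  let ?p = "binomial_weight m" and ?c = "4 * real m * Gbar\<^sup>2 / mu"
    and ?D2 = "(nrm d (vdiff xstar (xs 1)))\<^sup>2" and ?C = "real ((K + m) choose m)"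
  have "F (xs (Suc K)) - F xstar \<le> mu / 2 * ?D2 / (\<Sum>k=1..K. ?p k) + 12 * ?c * ln (real K) / real K"
  proof (rule last_iterate_le[where h = "\<lambda>k. F (xs k) - F xstar"])
    show "(\<Sum>k=1..K. ?p k * (F (xs (Suc k)) - F xstar)) \<le> mu / 2 * ?D2 + ?c * (\<Sum>k=1..K. ?p k / real k)"
      using weighted_suffix_le[of 1 xstar] K_ge xstar m_pos binomial_weight_one[OF m_pos]
      by (simp add: nrm_vdiff_commute)
  next
    fix j assume "j \<in> {2..K}"
    then have "(\<Sum>k=j..K. ?p k * (F (xs (Suc k)) - F (xs j)))
        \<le> ?p j * (mu * real j / 2 * dist2 (xs j) j) / real m + ?c * (\<Sum>k=j..K. ?p k / real k)"
      using iterate_in[of j] by (intro weighted_suffix_le) auto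
    moreover have "?p j * (mu * real j / 2 * dist2 (xs j) j) / real m = 0"
      by (simp add: nrm_vdiff_self)
    moreover have "(\<Sum>k=j..K. ?p k * (F (xs (Suc k)) - F xstar - (F (xs j) - F xstar)))
        = (\<Sum>k=j..K. ?p k * (F (xs (Suc k)) - F (xs j)))"
      by (intro sum.cong) auto
    ultimately show "(\<Sum>k=j..K. ?p k * (F (xs (Suc k)) - F xstar - (F (xs j) - F xstar)))
        \<le> ?c * (\<Sum>k=j..K. ?p k / real k)"
      by linarith
  qed (use K_ge binomial_weight_pos binomial_weight_mono m_pos mu_pos in auto)
  also have "\<dots> \<le> mu * ?D2 / ?C + 48 * (Gbar\<^sup>2 * real m * ln (real K) / (mu * real K))"
  proof (rule add_mono)
    have "?C \<le> 2 * (\<Sum>k=1..K. ?p k)" "0 < ?C"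
      using choose_le_two_sum_binomial_weight[OF m_pos, of K] K_ge by auto
    then show "mu / 2 * ?D2 / (\<Sum>k=1..K. ?p k) \<le> mu * ?D2 / ?C"
      using mu_pos by (simp add: frac_le)
    show "12 * ?c * ln (real K) / real K \<le> 48 * (Gbar\<^sup>2 * real m * ln (real K) / (mu * real K))"
      by (simp add: field_simps)
  qed
  also have "\<dots> \<le> 48 * (mu * ?D2 / ?C + Gbar\<^sup>2 * real m * ln (real K) / (mu * real K))"
    using mu_pos by (simp add: distrib_left divide_right_mono)
  finally show ?thesis .
qed

end

theorem theorem4p5:
  shows "\<exists>C::real. C > 0 \<and>
    (\<forall>(d::nat) (n::nat) (f :: nat \<Rightarrow> (nat \<Rightarrow> real) \<Rightarrow> real)
       (gf :: nat \<Rightarrow> (nat \<Rightarrow> real) \<Rightarrow> (nat \<Rightarrow> real)) (G :: nat \<Rightarrow> real)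
       (S :: (nat \<Rightarrow> real) set) (psi :: (nat \<Rightarrow> real) \<Rightarrow> real) (mu::real)
       (m::nat) (K::nat) (sigma :: nat \<Rightarrow> nat \<Rightarrow> nat)
       (xs :: nat \<Rightarrow> (nat \<Rightarrow> real)) (xin :: nat \<Rightarrow> nat \<Rightarrow> (nat \<Rightarrow> real))
       (xstar :: nat \<Rightarrow> real).
     let F = (\<lambda>x. (\<Sum>i=1..n. f i x) / real n + psi x);
         eta = (\<lambda>k. real m / (real n * mu * real k));
         Gbar = (\<Sum>i=1..n. G i) / real n;
         D = nrm d (vdiff xstar (xs 1))
     in
     d \<ge> 1 \<and> n \<ge> 1 \<and> m \<ge> 1 \<and> K \<ge> 2 \<and>
     (\<forall>i\<in>{1..n}. convex_fun_on (vec d) (f i)) \<and>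
     (\<forall>i\<in>{1..n}. \<forall>x\<in>vec d. gf i x \<in> subgrad d (vec d) (f i) x) \<and>
     (\<forall>i\<in>{1..n}. G i > 0 \<and> (\<forall>x\<in>vec d. \<forall>g\<in>subgrad d (vec d) (f i) x. nrm d g \<le> G i)) \<and>
     proper_closed_convex d S psi \<and>
     mu_condition d S psi mu \<and> mu > 0 \<and>
     xstar \<in> S \<and> (\<forall>x\<in>S. F xstar \<le> F x) \<and>
     prox_shuffling_run d n gf S psi K eta sigma xs xin
     \<longrightarrow> F (xs (Suc K)) - F xstar
           \<le> C * (mu * D\<^sup>2 / real ((K + m) choose m) + Gbar\<^sup>2 * real m * ln (real K) / (mu * real K)))"
  unfolding Let_def
proof (intro exI[of _ 48] conjI allI impI)
  show "(0::real) < 48" by simp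
qed (elim conjE, rule prox_shuffling.last_iterate_rate, unfold_locales, auto)

end
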